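(* Let $T>0$, $p>1$, $E_1\ge0$, $\epsilon\in(0,1)$. Let $\varphi,\varphi_\epsilon\in L^2(\mathbb{R})$ with $\|\varphi-\varphi_\epsilon\|\le\epsilon$, and let $u$ be the exact solution of the backward heat problem with final value $\varphi$, satisfying $\|u(\cdot,0)\|\le E_1$. Choose $\beta=\epsilon^p$ and let $v_\epsilon=R_\beta\varphi_\epsilon$. Then for every $t\in[0,T]$, $$\|u(\cdot,t)-v_\epsilon(\cdot,t)\|\le \epsilon^{\frac{t}{T}}(E_1+1).$$
   Context: $\|\cdot\|$ denotes the norm of $L^2(\mathbb{R})$. The Fourier transform is $\hat\psi(\xi)=\frac{1}{\sqrt{2\pi}}\int_{-\infty}^{\infty}\psi(x)e^{-i\xi x}\,dx$ (extended to $L^2(\mathbb{R})$ as a unitary map). Exact solution: for $\varphi\in L^2(\mathbb{R})$, the exact solution $u$ of $u_t-u_{xx}=0$ on $\mathbb{R}\times(0,T)$, $u(\cdot,T)=\varphi$, is given by $\hat u(\xi,t)=e^{(T-t)\xi^2}\hat\varphi(\xi)$ for $t\in[0,T]$; it is assumed that $u(\cdot,0)\in L^2(\mathbb{R})$. Regularized solution: for $\beta>0$ and $\psi\in L^2(\mathbb{R})$, $R_\beta\psi$ is the function whose Fourier transform in $x$ is $\widehat{(R_\beta\psi)}(\xi,t)=\frac{e^{-t\xi^2}}{\beta e^{(p-1)T\xi^2}+e^{-T\xi^2}}\hat\psi(\xi)=\frac{e^{(T-t)\xi^2}}{1+\beta e^{pT\xi^2}}\hat\psi(\xi)$, $t\in[0,T]$.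 *)

theory Defs
  imports "HOL-Analysis.Analysis"
begin

text \<open>Square-integrable complex-valued functions on the real line (elements of L^2(R),
  represented by functions; the Fourier transform below is only required to behave
  correctly up to null sets).\<close>
definition L2 :: "(real \<Rightarrow> complex) set" where
  "L2 = {f. f \<in> borel_measurable lborel \<and> integrable lborel (\<lambda>x. (cmod (f x))\<^sup>2)}"

definition L2_norm :: "(real \<Rightarrow> complex) \<Rightarrow> real" where
  "L2_norm f = sqrt (\<integral>x. (cmod (f x))\<^sup>2 \<partial>lborel)"

definition fourier_integral :: "(real \<Rightarrow> complex) \<Rightarrow> real \<Rightarrow> complex" where
  "fourier_integral f \<xi> =
     complex_of_real (1 / sqrt (2 * pi)) * (\<integral>x. f x * cis (- (\<xi> * x)) \<partial>lborel)"

text \<open>These properties determine F on L2 up to null sets.\<close>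
definition is_L2_fourier :: "((real \<Rightarrow> complex) \<Rightarrow> (real \<Rightarrow> complex)) \<Rightarrow> bool" where
  "is_L2_fourier F \<longleftrightarrow>
     (\<forall>f\<in>L2. F f \<in> L2 \<and> L2_norm (F f) = L2_norm f) \<and>
     (\<forall>f\<in>L2. \<forall>g\<in>L2. \<forall>c::complex.
        AE \<xi> in lborel. F (\<lambda>x. c * f x + g x) \<xi> = c * F f \<xi> + F g \<xi>) \<and>
     (\<forall>g\<in>L2. \<exists>f\<in>L2. AE \<xi> in lborel. F f \<xi> = g \<xi>) \<and>
     (\<forall>f\<in>L2. integrable lborel f \<longrightarrow> (AE \<xi> in lborel. F f \<xi> = fourier_integral f \<xi>))"

end

theory Submission
  imports Defs
begin

(* On the Fourier side the error u(t) - v(t) has the symbol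
     e^((T-t)s) Phi - e^((T-t)s)/(1 + z) Phi_eps,     s = xi^2,  z = eps^p e^(pTs),
   which splits as  c * (e^(Ts) Phi) + K * (Phi - Phi_eps)  with
     c = e^(-ts) z/(1+z) <= eps^(t/T)   and   K = e^((T-t)s)/(1+z) <= eps^(t/T-1).
   Both bounds reduce, after writing the left side as a power of eps times z^r/(1+z)
   with 0 <= r <= 1, to the elementary inequality z^r <= 1 + z.
   Since e^(Ts) Phi is the transform of u(0), Plancherel turns this pointwise bound into
     ||u(t) - v(t)|| <= eps^(t/T) ||u(0)|| + eps^(t/T-1) ||phi - phi_eps||
                     <= eps^(t/T) E1 + eps^(t/T-1) eps = eps^(t/T) (E1 + 1). *)

lemma integral_Cauchy_Schwarz:
  fixes f g :: "'a \<Rightarrow> real"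
  assumes [measurable]: "f \<in> borel_measurable M" "g \<in> borel_measurable M"
    and nonneg: "\<And>x. f x \<ge> 0" "\<And>x. g x \<ge> 0"
    and sq_int: "integrable M (\<lambda>x. (f x)\<^sup>2)" "integrable M (\<lambda>x. (g x)\<^sup>2)"
  shows "integrable M (\<lambda>x. f x * g x)"
    and "(\<integral>x. f x * g x \<partial>M) \<le> sqrt (\<integral>x. (f x)\<^sup>2 \<partial>M) * sqrt (\<integral>x. (g x)\<^sup>2 \<partial>M)"
proof -
  show int: "integrable M (\<lambda>x. f x * g x)"
  proof (rule Bochner_Integration.integrable_bound[OF Bochner_Integration.integrable_add[OF sq_int]])
    show "AE x in M. norm (f x * g x) \<le> norm ((f x)\<^sup>2 + (g x)\<^sup>2)"
    proof (rule AE_I2)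
      fix x
      have "2 * f x * g x \<le> (f x)\<^sup>2 + (g x)\<^sup>2" by (rule sum_squares_bound)
      moreover have "0 \<le> f x * g x" using nonneg[of x] by simp
      ultimately show "norm (f x * g x) \<le> norm ((f x)\<^sup>2 + (g x)\<^sup>2)"
        by simp
    qed
  qed measurable
  define I A B where "I = (\<integral>x. f x * g x \<partial>M)" and "A = (\<integral>x. (f x)\<^sup>2 \<partial>M)"
    and "B = (\<integral>x. (g x)\<^sup>2 \<partial>M)"
  have I_nonneg: "I \<ge> 0" and A_nonneg: "A \<ge> 0" and B_nonneg: "B \<ge> 0"
    using nonneg unfolding I_def A_def B_def by auto
  have "(\<integral>\<^sup>+x. ennreal (f x) * ennreal (g x) \<partial>M)\<^sup>2
        \<le> (\<integral>\<^sup>+x. ennreal (f x) ^ 2 \<partial>M) * (\<integral>\<^sup>+x. ennreal (g x) ^ 2 \<partial>M)"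
    by (rule Cauchy_Schwarz_nn_integral) measurable
  also have "(\<integral>\<^sup>+x. ennreal (f x) * ennreal (g x) \<partial>M) = ennreal I"
    using nonneg int unfolding I_def
    by (simp add: ennreal_mult[symmetric] nn_integral_eq_integral)
  also have "(\<integral>\<^sup>+x. ennreal (f x) ^ 2 \<partial>M) = ennreal A"
    using nonneg sq_int unfolding A_def
    by (simp add: ennreal_power nn_integral_eq_integral)
  also have "(\<integral>\<^sup>+x. ennreal (g x) ^ 2 \<partial>M) = ennreal B"
    using nonneg sq_int unfolding B_def
    by (simp add: ennreal_power nn_integral_eq_integral)
  finally have "I\<^sup>2 \<le> A * B"
    using I_nonneg A_nonneg B_nonneg by (simp add: ennreal_power ennreal_mult[symmetric])
  then have "I \<le> sqrt (A * B)"
    using real_sqrt_le_mono real_sqrt_abs by fastforce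
  then show "I \<le> sqrt A * sqrt B" by (simp add: real_sqrt_mult)
qed

text \<open>L2 is closed under differences, since |f - g|^2 <= 2|f|^2 + 2|g|^2.\<close>

lemma L2_diff:
  assumes "f \<in> L2" "g \<in> L2"
  shows "(\<lambda>x. f x - g x) \<in> L2"
proof -
  have [measurable]: "f \<in> borel_measurable lborel" "g \<in> borel_measurable lborel"
    using assms by (auto simp: L2_def)
  have dom: "integrable lborel (\<lambda>x. 2 * (cmod (f x))\<^sup>2 + 2 * (cmod (g x))\<^sup>2)"
    using assms by (auto simp: L2_def)
  have "integrable lborel (\<lambda>x. (cmod (f x - g x))\<^sup>2)"
  proof (rule Bochner_Integration.integrable_bound[OF dom])
    show "AE x in lborel. norm ((cmod (f x - g x))\<^sup>2) \<le> norm (2 * (cmod (f x))\<^sup>2 + 2 * (cmod (g x))\<^sup>2)"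
    proof (rule AE_I2)
      fix x
      have "(cmod (f x - g x))\<^sup>2 \<le> (cmod (f x) + cmod (g x))\<^sup>2"
        by (simp add: power_mono norm_triangle_ineq4)
      also have "\<dots> \<le> 2 * (cmod (f x))\<^sup>2 + 2 * (cmod (g x))\<^sup>2"
        using sum_squares_bound[of "cmod (f x)" "cmod (g x)"] by (simp add: power2_sum)
      finally show "norm ((cmod (f x - g x))\<^sup>2) \<le> norm (2 * (cmod (f x))\<^sup>2 + 2 * (cmod (g x))\<^sup>2)"
        by simp
    qed
  qed measurable
  then show ?thesis by (auto simp: L2_def)
qed

text \<open>If |h| <= a|g1| + b|g2| almost everywhere with a, b >= 0, then
  ||h|| <= a ||g1|| + b ||g2|| (monotonicity plus the Minkowski inequality).\<close>

lemma L2_norm_le_combination: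
  assumes h: "h \<in> L2" and g1: "g1 \<in> L2" and g2: "g2 \<in> L2" and a: "a \<ge> 0" and b: "b \<ge> 0"
    and dominated: "AE x in lborel. cmod (h x) \<le> a * cmod (g1 x) + b * cmod (g2 x)"
  shows "L2_norm h \<le> a * L2_norm g1 + b * L2_norm g2"
proof -
  have [measurable]: "h \<in> borel_measurable lborel" "g1 \<in> borel_measurable lborel"
    "g2 \<in> borel_measurable lborel"
    using assms by (auto simp: L2_def)
  have int1: "integrable lborel (\<lambda>x. (cmod (g1 x))\<^sup>2)"
    and int2: "integrable lborel (\<lambda>x. (cmod (g2 x))\<^sup>2)"
    and inth: "integrable lborel (\<lambda>x. (cmod (h x))\<^sup>2)"
    using assms by (auto simp: L2_def)
  define N1 N2 where "N1 = (\<integral>x. (cmod (g1 x))\<^sup>2 \<partial>lborel)" and "N2 = (\<integral>x. (cmod (g2 x))\<^sup>2 \<partial>lborel)"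
  define C where "C = (\<integral>x. cmod (g1 x) * cmod (g2 x) \<partial>lborel)"
  have N: "N1 \<ge> 0" "N2 \<ge> 0" unfolding N1_def N2_def by auto
  note CS = integral_Cauchy_Schwarz[of "\<lambda>x. cmod (g1 x)" lborel "\<lambda>x. cmod (g2 x)", OF _ _ _ _ int1 int2]
  have int12: "integrable lborel (\<lambda>x. cmod (g1 x) * cmod (g2 x))"
    and C_le: "C \<le> sqrt N1 * sqrt N2"
    using CS unfolding C_def N1_def N2_def by auto
  have "(\<integral>x. (cmod (h x))\<^sup>2 \<partial>lborel)
        \<le> (\<integral>x. a\<^sup>2 * (cmod (g1 x))\<^sup>2 + 2 * a * b * (cmod (g1 x) * cmod (g2 x))
               + b\<^sup>2 * (cmod (g2 x))\<^sup>2 \<partial>lborel)"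
  proof (rule integral_mono_AE[OF inth])
    show "integrable lborel (\<lambda>x. a\<^sup>2 * (cmod (g1 x))\<^sup>2 + 2 * a * b * (cmod (g1 x) * cmod (g2 x))
               + b\<^sup>2 * (cmod (g2 x))\<^sup>2)"
      using int1 int2 int12 by auto
    show "AE x in lborel. (cmod (h x))\<^sup>2 \<le> a\<^sup>2 * (cmod (g1 x))\<^sup>2
            + 2 * a * b * (cmod (g1 x) * cmod (g2 x)) + b\<^sup>2 * (cmod (g2 x))\<^sup>2"
      using dominated
    proof eventually_elim
      case (elim x)
      then have "(cmod (h x))\<^sup>2 \<le> (a * cmod (g1 x) + b * cmod (g2 x))\<^sup>2"
        by (simp add: power_mono)
      then show ?case by (simp add: power2_eq_square algebra_simps)
    qed
  qed
  also have "\<dots> = a\<^sup>2 * N1 + 2 * a * b * C + b\<^sup>2 * N2"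
    unfolding N1_def N2_def C_def using int1 int2 int12 by simp
  also have "\<dots> \<le> a\<^sup>2 * N1 + 2 * a * b * (sqrt N1 * sqrt N2) + b\<^sup>2 * N2"
    using C_le a b by (simp add: mult_left_mono)
  also have "\<dots> = (a * sqrt N1 + b * sqrt N2)\<^sup>2"
    using N by (simp add: power2_eq_square algebra_simps)
  finally have "sqrt (\<integral>x. (cmod (h x))\<^sup>2 \<partial>lborel) \<le> a * sqrt N1 + b * sqrt N2"
    using a b N by (metis real_sqrt_le_mono real_sqrt_abs abs_of_nonneg add_nonneg_nonneg
        mult_nonneg_nonneg real_sqrt_ge_zero)
  then show ?thesis unfolding L2_norm_def N1_def N2_def .
qed

lemma fourier_diff:
  assumes F: "is_L2_fourier F" and "f \<in> L2" "g \<in> L2"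
  shows "AE \<xi> in lborel. F (\<lambda>x. f x - g x) \<xi> = F f \<xi> - F g \<xi>"
proof -
  have "AE \<xi> in lborel. F (\<lambda>x. (-1) * g x + f x) \<xi> = (-1) * F g \<xi> + F f \<xi>"
    using F assms unfolding is_L2_fourier_def by blast
  then show ?thesis by simp
qed

lemma fourier_L2_bound:
  assumes F: "is_L2_fourier F" and "w \<in> L2" "f \<in> L2" "g \<in> L2" and "a \<ge> 0" "b \<ge> 0"
    and "AE \<xi> in lborel. cmod (F w \<xi>) \<le> a * cmod (F f \<xi>) + b * cmod (F g \<xi>)"
  shows "L2_norm w \<le> a * L2_norm f + b * L2_norm g"
proof -
  have plancherel: "\<And>h. h \<in> L2 \<Longrightarrow> F h \<in> L2 \<and> L2_norm (F h) = L2_norm h"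
    using F unfolding is_L2_fourier_def by blast
  show ?thesis
    using L2_norm_le_combination[of "F w" "F f" "F g" a b] plancherel assms by auto
qed

lemma powr_le_one_plus:
  fixes z r :: real
  assumes "z > 0" "0 \<le> r" "r \<le> 1"
  shows "z powr r \<le> 1 + z"
proof (cases "z \<le> 1")
  case True
  then have "z powr r \<le> 1" using assms by (intro powr_le1) auto
  then show ?thesis using assms by linarith
next
  case False
  then have "z powr r \<le> z powr 1" using assms by (intro powr_mono) auto
  then show ?thesis using assms by simp
qed

text \<open>For the weight z = eps^p exp(pTs) (the regularizing term at frequency level s = xi^2),
  powers of z are exponentials of affine expressions in ln eps and s.\<close>

lemma weight_powr:
  fixes \<epsilon> p T s r :: real
  assumes "\<epsilon> > 0"
  shows "(\<epsilon> powr p * exp (p * T * s)) powr r = exp (r * (p * ln \<epsilon> + p * T * s))"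
  using assms by (simp add: powr_def exp_add[symmetric])

lemma damped_weight_le:
  fixes T p t \<epsilon> s :: real
  assumes T: "T > 0" and p: "p > 1" and t: "0 \<le> t" "t \<le> T" and eps: "\<epsilon> > 0"
  defines "z \<equiv> \<epsilon> powr p * exp (p * T * s)"
  shows "exp (- (t * s)) * z / (1 + z) \<le> \<epsilon> powr (t / T)"
proof -
  define r where "r = 1 - t / (p * T)"
  have "t \<le> p * T" using t T p by (smt (verit) mult_le_cancel_right1)
  then have r: "0 \<le> r" "r \<le> 1" using t T p by (auto simp: r_def field_simps)
  have z: "z > 0" using eps by (simp add: z_def)
  have "exp (- (t * s)) * z = \<epsilon> powr (t / T) * z powr r"
  proof -
    have "- (t * s) + (p * ln \<epsilon> + p * T * s) = t / T * ln \<epsilon> + r * (p * ln \<epsilon> + p * T * s)"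
      using T p by (simp add: r_def field_simps)
    then show ?thesis
      using eps weight_powr[OF eps, of p T s 1] weight_powr[OF eps, of p T s r]
      by (simp add: z_def powr_def[of \<epsilon>] exp_add[symmetric])
  qed
  also have "\<dots> \<le> \<epsilon> powr (t / T) * (1 + z)"
    using powr_le_one_plus[OF z r] by (intro mult_left_mono) auto
  finally show ?thesis using z by (simp add: divide_le_eq)
qed

lemma growth_weight_le:
  fixes T p t \<epsilon> s :: real
  assumes T: "T > 0" and p: "p > 1" and t: "0 \<le> t" "t \<le> T" and eps: "\<epsilon> > 0"
  defines "z \<equiv> \<epsilon> powr p * exp (p * T * s)"
  shows "exp ((T - t) * s) / (1 + z) \<le> \<epsilon> powr (t / T - 1)"
proof -
  define r where "r = (T - t) / (p * T)"
  have "T - t \<le> p * T" using t T p by (smt (verit) mult_le_cancel_right1)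
  then have r: "0 \<le> r" "r \<le> 1" using t T p by (auto simp: r_def field_simps)
  have z: "z > 0" using eps by (simp add: z_def)
  have "exp ((T - t) * s) = \<epsilon> powr (t / T - 1) * z powr r"
  proof -
    have "(T - t) * s = (t / T - 1) * ln \<epsilon> + r * (p * ln \<epsilon> + p * T * s)"
      using T p by (simp add: r_def field_simps)
    then show ?thesis
      using eps weight_powr[OF eps, of p T s r]
      by (simp add: z_def powr_def[of \<epsilon>] exp_add[symmetric])
  qed
  also have "\<dots> \<le> \<epsilon> powr (t / T - 1) * (1 + z)"
    using powr_le_one_plus[OF z r] by (intro mult_left_mono) auto
  finally show ?thesis using z by (simp add: divide_le_eq)
qed

lemma error_symbol_bound:
  fixes T p t \<epsilon> \<beta> s :: real and \<Phi> \<Phi>\<epsilon> :: complex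
  assumes T: "T > 0" and p: "p > 1" and t: "0 \<le> t" "t \<le> T" and eps: "\<epsilon> > 0"
    and beta: "\<beta> = \<epsilon> powr p"
  shows "cmod (exp ((T - t) * s) * \<Phi>
            - (exp ((T - t) * s) / (1 + \<beta> * exp (p * T * s))) * \<Phi>\<epsilon>)
         \<le> \<epsilon> powr (t / T) * cmod (exp (T * s) * \<Phi>) + \<epsilon> powr (t / T - 1) * cmod (\<Phi> - \<Phi>\<epsilon>)"
proof -
  define z where "z = \<beta> * exp (p * T * s)"
  define c where "c = exp (- (t * s)) * z / (1 + z)"
  define K where "K = exp ((T - t) * s) / (1 + z)"
  have z: "z > 0" using eps by (simp add: z_def beta)
  have c: "0 \<le> c" "c \<le> \<epsilon> powr (t / T)"
    using z damped_weight_le[OF T p t eps] by (auto simp: c_def z_def beta)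
  have K: "0 \<le> K" "K \<le> \<epsilon> powr (t / T - 1)"
    using z growth_weight_le[OF T p t eps] by (auto simp: K_def z_def beta)
  have "exp (- (t * s)) * exp (T * s) = exp ((T - t) * s)"
    by (simp add: exp_add[symmetric] algebra_simps)
  then have "c * exp (T * s) + K = exp ((T - t) * s) * (z + 1) / (1 + z)"
    by (simp add: c_def K_def add_divide_distrib[symmetric] algebra_simps)
  then have split: "exp ((T - t) * s) = c * exp (T * s) + K"
    using z by (simp add: add.commute)
  have "exp ((T - t) * s) * \<Phi> - K * \<Phi>\<epsilon> = c * (exp (T * s) * \<Phi>) + K * (\<Phi> - \<Phi>\<epsilon>)"
  proof -
    have "complex_of_real (exp ((T - t) * s)) = of_real c * of_real (exp (T * s)) + of_real K"
      by (simp add: split)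
    then show ?thesis by (simp add: algebra_simps)
  qed
  then have "cmod (exp ((T - t) * s) * \<Phi> - K * \<Phi>\<epsilon>)
             \<le> c * cmod (exp (T * s) * \<Phi>) + K * cmod (\<Phi> - \<Phi>\<epsilon>)"
    using c K by (metis norm_triangle_ineq norm_mult norm_of_real abs_of_nonneg)
  also have "\<dots> \<le> \<epsilon> powr (t / T) * cmod (exp (T * s) * \<Phi>) + \<epsilon> powr (t / T - 1) * cmod (\<Phi> - \<Phi>\<epsilon>)"
    using c K by (intro add_mono mult_right_mono) auto
  finally show ?thesis by (simp add: K_def z_def)
qed

theorem theorem3:
  fixes F :: "(real \<Rightarrow> complex) \<Rightarrow> (real \<Rightarrow> complex)"
    and T p E1 \<epsilon> \<beta> :: real
    and \<phi> \<phi>\<epsilon> :: "real \<Rightarrow> complex"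
    and u v :: "real \<Rightarrow> real \<Rightarrow> complex"
  assumes F: "is_L2_fourier F"
    and T: "T > 0" and p: "p > 1" and E1: "E1 \<ge> 0"
    and eps: "0 < \<epsilon>" "\<epsilon> < 1"
    and phi: "\<phi> \<in> L2" "\<phi>\<epsilon> \<in> L2" "L2_norm (\<lambda>x. \<phi> x - \<phi>\<epsilon> x) \<le> \<epsilon>"
    and u_exact: "\<forall>t\<in>{0..T}. (\<lambda>x. u x t) \<in> L2 \<and>
        (AE \<xi> in lborel. F (\<lambda>x. u x t) \<xi> = complex_of_real (exp ((T - t) * \<xi>\<^sup>2)) * F \<phi> \<xi>)"
    and u0: "L2_norm (\<lambda>x. u x 0) \<le> E1"
    and beta: "\<beta> = \<epsilon> powr p"
    and v_reg: "\<forall>t\<in>{0..T}. (\<lambda>x. v x t) \<in> L2 \<and>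
        (AE \<xi> in lborel. F (\<lambda>x. v x t) \<xi> =
           complex_of_real (exp ((T - t) * \<xi>\<^sup>2) / (1 + \<beta> * exp (p * T * \<xi>\<^sup>2))) * F \<phi>\<epsilon> \<xi>)"
  shows "\<forall>t\<in>{0..T}. L2_norm (\<lambda>x. u x t - v x t) \<le> \<epsilon> powr (t / T) * (E1 + 1)"
  
proof
  fix t assume t: "t \<in> {0..T}"
  then have t_bounds: "0 \<le> t" "t \<le> T" by auto
  have zero: "0 \<in> {0..T}" using T by simp
  have u0_L2: "(\<lambda>x. u x 0) \<in> L2"
    and Fu0: "AE \<xi> in lborel. F (\<lambda>x. u x 0) \<xi> = exp (T * \<xi>\<^sup>2) * F \<phi> \<xi>"
    using bspec[OF u_exact zero] by simp_all
  have ut_L2: "(\<lambda>x. u x t) \<in> L2" and vt_L2: "(\<lambda>x. v x t) \<in> L2"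
    and Fut: "AE \<xi> in lborel. F (\<lambda>x. u x t) \<xi> = exp ((T - t) * \<xi>\<^sup>2) * F \<phi> \<xi>"
    and Fvt: "AE \<xi> in lborel. F (\<lambda>x. v x t) \<xi> =
           (exp ((T - t) * \<xi>\<^sup>2) / (1 + \<beta> * exp (p * T * \<xi>\<^sup>2))) * F \<phi>\<epsilon> \<xi>"
    using u_exact v_reg t by auto
  have "AE \<xi> in lborel. cmod (F (\<lambda>x. u x t - v x t) \<xi>)
      \<le> \<epsilon> powr (t / T) * cmod (F (\<lambda>x. u x 0) \<xi>)
        + \<epsilon> powr (t / T - 1) * cmod (F (\<lambda>x. \<phi> x - \<phi>\<epsilon> x) \<xi>)"
    using fourier_diff[OF F ut_L2 vt_L2] Fut Fvt Fu0 fourier_diff[OF F phi(1,2)]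
  proof eventually_elim
    case (elim \<xi>)
    then show ?case
      using error_symbol_bound[OF T p t_bounds eps(1) beta, of "\<xi>\<^sup>2" "F \<phi> \<xi>" "F \<phi>\<epsilon> \<xi>"] by simp
  qed
  then have "L2_norm (\<lambda>x. u x t - v x t)
      \<le> \<epsilon> powr (t / T) * L2_norm (\<lambda>x. u x 0) + \<epsilon> powr (t / T - 1) * L2_norm (\<lambda>x. \<phi> x - \<phi>\<epsilon> x)"
    by (intro fourier_L2_bound[OF F] L2_diff u0_L2 ut_L2 vt_L2 phi(1,2)) auto
  also have "\<dots> \<le> \<epsilon> powr (t / T) * E1 + \<epsilon> powr (t / T - 1) * \<epsilon>"
    using u0 phi(3) by (intro add_mono mult_left_mono) auto
  also have "\<epsilon> powr (t / T - 1) * \<epsilon> = \<epsilon> powr (t / T)"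
    using powr_add[of \<epsilon> "t / T - 1" 1] eps by simp
  finally show "L2_norm (\<lambda>x. u x t - v x t) \<le> \<epsilon> powr (t / T) * (E1 + 1)"
    by (simp add: algebra_simps)
qed

end
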